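(* Let $q$ be a prime and $1\le K<N$ with $q^K>2$, and let $M=q^K$. Let $G$ ($K\times N$) and $\mathbf{v}\in\mathbb{F}_q^N$ have independent uniformly distributed entries in $\mathbb{F}_q$, and for each message index $j\in\{0,\dots,M-1\}$ let $\mathbf{x}_j=\mathbf{u}_jG+\mathbf{v}$, where $\mathbf{u}_j\in\mathbb{F}_q^K$ is the $q$-ary representation of $j$. Let $P_N(\mathbf{y}\mid\mathbf{x})$ be a channel transition probability from inputs in $\mathbb{F}_q^N$ to outputs in a finite set, and for input $\mathbf{x}$ and output $\mathbf{y}$ let $A(\mathbf{x},\mathbf{y})=\{\mathbf{x}': P_N(\mathbf{y}\mid\mathbf{x}')\ge P_N(\mathbf{y}\mid\mathbf{x})\}$. Fix an index $m$, a value $\mathbf{x}_m$ of its codeword and an output $\mathbf{y}$; for $j\ne m$ let $A_j(\mathbf{x}_m,\mathbf{y})$ be the event $\{\mathbf{x}_j\in A(\mathbf{x}_m,\mathbf{y})\}$, with probabilities over the ensemble conditioned on the codeword of index $m$ being $\mathbf{x}_m$, and let $\alpha=\Pr(A_{m'}(\mathbf{x}_m,\mathbf{y}))$ for any $m'\neq m$ (this does not depend on $m'$). Then for every constant $\rho\ge1$, $$\frac{(M-1)\alpha}{q}-[(M-1)\alpha]^\rho\le\Pr\Big(\bigcup_{m'\ne m}A_{m'}(\mathbf{x}_m,\mathbf{y})\Big)\le (M-1)\alpha.$$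
   Context: All vector operations are componentwise mod $q$. *)

theory Defs
  imports "HOL-Analysis.Analysis" "HOL-Computational_Algebra.Primes"
begin

text \<open>Elements of F_q are represented by {0..<q} with arithmetic mod q (q prime).
  Vectors in F_q^N are extensional functions on {0..<N}.\<close>

definition FqN :: "nat \<Rightarrow> nat \<Rightarrow> (nat \<Rightarrow> nat) set" where
  "FqN q N = PiE {0..<N} (\<lambda>_. {0..<q})"

text \<open>Random generator matrix G (K x N, G k i) and dither vector v, uniform.\<close>
definition ensemble :: "nat \<Rightarrow> nat \<Rightarrow> nat \<Rightarrow> ((nat \<Rightarrow> nat \<Rightarrow> nat) \<times> (nat \<Rightarrow> nat)) set" where
  "ensemble q K N = PiE {0..<K} (\<lambda>_. FqN q N) \<times> FqN q N"

definition qary :: "nat \<Rightarrow> nat \<Rightarrow> nat \<Rightarrow> nat" where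
  "qary q j k = (j div q ^ k) mod q"

definition codeword :: "nat \<Rightarrow> nat \<Rightarrow> nat \<Rightarrow> nat \<Rightarrow>
    (nat \<Rightarrow> nat \<Rightarrow> nat) \<times> (nat \<Rightarrow> nat) \<Rightarrow> (nat \<Rightarrow> nat)" where
  "codeword q K N j \<omega> = (\<lambda>i\<in>{0..<N}.
      ((\<Sum>k<K. qary q j k * fst \<omega> k i) + snd \<omega> i) mod q)"

definition Aset :: "nat \<Rightarrow> nat \<Rightarrow> ((nat \<Rightarrow> nat) \<Rightarrow> 'b \<Rightarrow> real) \<Rightarrow> (nat \<Rightarrow> nat) \<Rightarrow> 'b
    \<Rightarrow> (nat \<Rightarrow> nat) set" where
  "Aset q N P x y = {x' \<in> FqN q N. P x' y \<ge> P x y}"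

definition cond_set :: "nat \<Rightarrow> nat \<Rightarrow> nat \<Rightarrow> nat \<Rightarrow> (nat \<Rightarrow> nat)
    \<Rightarrow> ((nat \<Rightarrow> nat \<Rightarrow> nat) \<times> (nat \<Rightarrow> nat)) set" where
  "cond_set q K N m xm = {\<omega> \<in> ensemble q K N. codeword q K N m \<omega> = xm}"

definition cond_prob :: "nat \<Rightarrow> nat \<Rightarrow> nat \<Rightarrow> nat \<Rightarrow> (nat \<Rightarrow> nat)
    \<Rightarrow> ((nat \<Rightarrow> nat \<Rightarrow> nat) \<times> (nat \<Rightarrow> nat) \<Rightarrow> bool) \<Rightarrow> real" where
  "cond_prob q K N m xm B =
     real (card {\<omega> \<in> cond_set q K N m xm. B \<omega>}) / real (card (cond_set q K N m xm))"

end

theory Submission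
  imports Defs "HOL-Number_Theory.Cong"
begin

text \<open>
  Translating \<open>G\<close> by a matrix \<open>H\<close> and \<open>v\<close> by \<open>-u\<^sub>m H\<close> fixes \<open>x\<^sub>m\<close> and
  moves each \<open>x\<^sub>j\<close> by \<open>(u\<^sub>j - u\<^sub>m) H\<close>. Since \<open>u\<^sub>j - u\<^sub>m \<noteq> 0\<close> for \<open>j \<noteq> m\<close>, these translations carry any
  value of \<open>x\<^sub>j\<close> to any other, so \<open>x\<^sub>j\<close> is uniform and \<open>\<alpha> = |A| / q\<^sup>N\<close>; if moreover
  \<open>u\<^sub>i - u\<^sub>m\<close> and \<open>u\<^sub>j - u\<^sub>m\<close> are linearly independent, the pair \<open>(x\<^sub>i, x\<^sub>j)\<close> is uniform, so
  \<open>A\<^sub>i\<close> and \<open>A\<^sub>j\<close> are independent. For fixed \<open>i\<close> at most \<open>q - 1\<close> indices \<open>j\<close> are dependent.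

  The upper bound is the union bound. For the lower bound let \<open>X\<close> count the events that occur
  and \<open>t = (M - 1) \<alpha>\<close>; the pointwise inequality \<open>[X > 0] \<ge> 2X/q - X\<^sup>2/q\<^sup>2\<close> and the moments
  \<open>E X = t\<close>, \<open>E X\<^sup>2 \<le> t (q - 1 + t)\<close> give \<open>Pr(\<Union> A\<^sub>j) \<ge> t/q + t (1 - t)/q\<^sup>2\<close>, which is at least
  \<open>t/q - t\<^sup>\<rho>\<close> for \<open>t \<le> 1\<close>; for \<open>t > 1\<close> the claimed lower bound is negative.
\<close>

lemma card_UN_ge_second_moment:
  fixes E :: "'i \<Rightarrow> 'a set" and r :: real
  assumes J: "finite J" and E: "\<And>j. j \<in> J \<Longrightarrow> finite (E j)" and r: "r > 0"
  shows "2 * (\<Sum>j\<in>J. real (card (E j))) / r - (\<Sum>i\<in>J. \<Sum>j\<in>J. real (card (E i \<inter> E j))) / r\<^sup>2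
         \<le> real (card (\<Union>j\<in>J. E j))"
proof -
  define U where "U = (\<Union>j\<in>J. E j)"
  define X where "X w = (\<Sum>j\<in>J. of_bool (w \<in> E j) :: real)" for w
  have U: "finite U" "\<And>j. j \<in> J \<Longrightarrow> E j \<subseteq> U" using J E by (auto simp: U_def)
  have card_sum: "real (card S) = (\<Sum>w\<in>U. of_bool (w \<in> S))" if "S \<subseteq> U" for S
    using U(1) that by (simp add: Int_absorb1 Int_def[symmetric])
  have "(\<Sum>j\<in>J. real (card (E j))) = (\<Sum>j\<in>J. \<Sum>w\<in>U. of_bool (w \<in> E j))"
    using card_sum U(2) by simp
  also have "\<dots> = (\<Sum>w\<in>U. X w)" unfolding X_def by (rule sum.swap)
  finally have first: "(\<Sum>j\<in>J. real (card (E j))) = (\<Sum>w\<in>U. X w)" .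
  have "(\<Sum>i\<in>J. \<Sum>j\<in>J. real (card (E i \<inter> E j)))
      = (\<Sum>i\<in>J. \<Sum>j\<in>J. \<Sum>w\<in>U. of_bool (w \<in> E i) * of_bool (w \<in> E j))"
  proof (intro sum.cong refl)
    fix i j assume "i \<in> J" "j \<in> J"
    then show "real (card (E i \<inter> E j)) = (\<Sum>w\<in>U. of_bool (w \<in> E i) * of_bool (w \<in> E j))"
      using card_sum[of "E i \<inter> E j"] U(2) by (force simp: of_bool_conj)
  qed
  also have "\<dots> = (\<Sum>w\<in>U. (X w)\<^sup>2)"
    by (simp add: X_def power2_eq_square sum_product sum.swap[of _ U])
  finally have second: "(\<Sum>i\<in>J. \<Sum>j\<in>J. real (card (E i \<inter> E j))) = (\<Sum>w\<in>U. (X w)\<^sup>2)" .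
  have pointwise: "2 * X w / r - (X w)\<^sup>2 / r\<^sup>2 \<le> 1" for w
  proof -
    have "0 \<le> (X w / r - 1)\<^sup>2" by simp
    also have "\<dots> = 1 - (2 * X w / r - (X w)\<^sup>2 / r\<^sup>2)"
      using r by (simp add: power2_eq_square field_simps)
    finally show ?thesis by simp
  qed
  have "(\<Sum>w\<in>U. 2 * X w / r - (X w)\<^sup>2 / r\<^sup>2) \<le> real (card U)"
    using sum_mono[of U _ "\<lambda>_. 1", OF pointwise] by simp
  then show ?thesis
    unfolding first second U_def[symmetric]
    by (simp add: sum_subtractf sum_divide_distrib sum_distrib_left)
qed

lemma sum_card_Int_le:
  fixes E :: "'i \<Rightarrow> 'a set" and R :: "'i \<Rightarrow> 'i \<Rightarrow> bool"
  assumes J: "finite J" and E: "\<And>j. j \<in> J \<Longrightarrow> finite (E j)"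
    and card_E: "\<And>j. j \<in> J \<Longrightarrow> real (card (E j)) = c"
    and card_Int: "\<And>i j. i \<in> J \<Longrightarrow> j \<in> J \<Longrightarrow> \<not> R i j \<Longrightarrow> real (card (E i \<inter> E j)) \<le> d"
    and related: "\<And>i. i \<in> J \<Longrightarrow> real (card {j\<in>J. R i j}) \<le> k"
    and "0 \<le> c" "0 \<le> d"
  shows "(\<Sum>i\<in>J. \<Sum>j\<in>J. real (card (E i \<inter> E j))) \<le> real (card J) * (k * c + real (card J) * d)"
proof -
  have row: "(\<Sum>j\<in>J. real (card (E i \<inter> E j))) \<le> k * c + real (card J) * d" if i: "i \<in> J" for i
  proof -
    have "(\<Sum>j\<in>J. real (card (E i \<inter> E j))) \<le> (\<Sum>j\<in>J. if R i j then c else d)"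
    proof (rule sum_mono)
      fix j assume j: "j \<in> J"
      have "card (E i \<inter> E j) \<le> card (E i)" using E[OF i] by (simp add: card_mono)
      then show "real (card (E i \<inter> E j)) \<le> (if R i j then c else d)"
        using card_E[OF i] card_Int[OF i j] by auto
    qed
    also have "\<dots> = real (card {j\<in>J. R i j}) * c + real (card {j\<in>J. \<not> R i j}) * d"
      using J by (simp add: sum.If_cases Int_def)
    also have "\<dots> \<le> k * c + real (card J) * d"
      using related[OF i] J \<open>0 \<le> c\<close> \<open>0 \<le> d\<close>
      by (intro add_mono mult_right_mono) (auto intro: card_mono)
    finally show ?thesis .
  qed
  have "(\<Sum>i\<in>J. \<Sum>j\<in>J. real (card (E i \<inter> E j))) \<le> (\<Sum>i\<in>J. k * c + real (card J) * d)"
    using row by (rule sum_mono)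
  then show ?thesis by simp
qed

lemma card_UN_uniform_bounds:
  fixes E :: "'i \<Rightarrow> 'a set" and R :: "'i \<Rightarrow> 'i \<Rightarrow> bool" and n a r \<rho> :: real
  assumes J: "finite J" and E: "\<And>j. j \<in> J \<Longrightarrow> finite (E j)"
    and card_E: "\<And>j. j \<in> J \<Longrightarrow> real (card (E j)) = n * a"
    and card_Int: "\<And>i j. i \<in> J \<Longrightarrow> j \<in> J \<Longrightarrow> \<not> R i j \<Longrightarrow> real (card (E i \<inter> E j)) \<le> n * a\<^sup>2"
    and related: "\<And>i. i \<in> J \<Longrightarrow> real (card {j\<in>J. R i j}) \<le> r - 1"
    and "0 < n" "0 \<le> a" "1 \<le> r" "1 \<le> \<rho>"
  defines "t \<equiv> real (card J) * a"
  shows "t / r - t powr \<rho> \<le> real (card (\<Union>j\<in>J. E j)) / n"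
    and "real (card (\<Union>j\<in>J. E j)) / n \<le> t"
proof -
  let ?u = "real (card (\<Union>j\<in>J. E j)) / n"
  have t: "0 \<le> t" using \<open>0 \<le> a\<close> by (simp add: t_def)
  have first: "(\<Sum>j\<in>J. real (card (E j))) = n * t"
    using card_E by (simp add: t_def)
  have "card (\<Union>j\<in>J. E j) \<le> (\<Sum>j\<in>J. card (E j))" using J by (rule card_UN_le)
  then have "real (card (\<Union>j\<in>J. E j)) \<le> n * t" unfolding first[symmetric] of_nat_sum[symmetric] by linarith
  then show "?u \<le> t" using \<open>0 < n\<close> by (simp add: divide_le_eq mult.commute)
  have "(\<Sum>i\<in>J. \<Sum>j\<in>J. real (card (E i \<inter> E j))) \<le> real (card J) * ((r - 1) * (n * a) + real (card J) * (n * a\<^sup>2))"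
    using \<open>0 < n\<close> \<open>0 \<le> a\<close> by (intro sum_card_Int_le[OF J E card_E card_Int related]) auto
  also have "\<dots> = n * t * (r - 1 + t)" by (simp add: t_def power2_eq_square algebra_simps)
  finally have second: "(\<Sum>i\<in>J. \<Sum>j\<in>J. real (card (E i \<inter> E j))) \<le> n * t * (r - 1 + t)" .
  have "n * (2 * t / r - t * (r - 1 + t) / r\<^sup>2) \<le> real (card (\<Union>j\<in>J. E j))"
  proof -
    have "n * t * (r - 1 + t) / r\<^sup>2 \<ge> (\<Sum>i\<in>J. \<Sum>j\<in>J. real (card (E i \<inter> E j))) / r\<^sup>2"
      using second by (simp add: divide_right_mono)
    moreover have "2 * (n * t) / r - (\<Sum>i\<in>J. \<Sum>j\<in>J. real (card (E i \<inter> E j))) / r\<^sup>2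
        \<le> real (card (\<Union>j\<in>J. E j))"
      using card_UN_ge_second_moment[of J E r] J E \<open>1 \<le> r\<close> unfolding first by simp
    ultimately show ?thesis by (simp add: algebra_simps)
  qed
  then have lower: "2 * t / r - t * (r - 1 + t) / r\<^sup>2 \<le> ?u"
    using \<open>0 < n\<close> by (simp add: le_divide_eq mult.commute)
  show "t / r - t powr \<rho> \<le> ?u"
  proof (cases "t \<le> 1")
    case True
    \<comment> \<open>the second-moment bound equals \<open>t / r + t (1 - t) / r\<^sup>2\<close>\<close>
    have "t / r \<le> 2 * t / r - t * (r - 1 + t) / r\<^sup>2"
      using True t \<open>1 \<le> r\<close> mult_left_le[of t t] by (simp add: field_simps power2_eq_square)
    then show ?thesis using lower powr_ge_zero[of t \<rho>] by linarith
  next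
    case False
    then have "t \<le> t powr \<rho>" using \<open>1 \<le> \<rho>\<close> powr_mono[of 1 \<rho> t] by simp
    moreover have "t / r \<le> t" using t \<open>1 \<le> r\<close> by (simp add: divide_le_eq mult_le_cancel_left1)
    moreover have "0 \<le> ?u" using \<open>0 < n\<close> by simp
    ultimately show ?thesis by linarith
  qed
qed

lemma card_preimage_uniform:
  assumes fin: "finite \<Omega>" "finite T" and gT: "\<And>\<omega>. \<omega> \<in> \<Omega> \<Longrightarrow> g \<omega> \<in> T" and "\<Omega> \<noteq> {}"
    and shift: "\<And>s s'. s \<in> T \<Longrightarrow> s' \<in> T \<Longrightarrow>
        \<exists>\<tau>. inj_on \<tau> \<Omega> \<and> \<tau> ` \<Omega> \<subseteq> \<Omega> \<and> (\<forall>\<omega>\<in>\<Omega>. g \<omega> = s \<longrightarrow> g (\<tau> \<omega>) = s')"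
    and "S \<subseteq> T"
  shows "card {\<omega>\<in>\<Omega>. g \<omega> \<in> S} * card T = card S * card \<Omega>"
proof -
  define F where "F s = {\<omega>\<in>\<Omega>. g \<omega> = s}" for s
  have le: "card (F s) \<le> card (F s')" if st: "s \<in> T" "s' \<in> T" for s s'
  proof -
    obtain \<tau> where \<tau>: "inj_on \<tau> \<Omega>" "\<tau> ` \<Omega> \<subseteq> \<Omega>" "\<forall>\<omega>\<in>\<Omega>. g \<omega> = s \<longrightarrow> g (\<tau> \<omega>) = s'"
      using shift[OF st] by blast
    have "inj_on \<tau> (F s)" using \<tau>(1) by (rule inj_on_subset) (auto simp: F_def)
    moreover have "\<tau> ` F s \<subseteq> F s'" using \<tau>(2,3) by (auto simp: F_def)
    ultimately show ?thesis using fin by (intro card_inj_on_le) (auto simp: F_def)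
  qed
  obtain \<omega>0 where "\<omega>0 \<in> \<Omega>" using \<open>\<Omega> \<noteq> {}\<close> by blast
  then have s0: "g \<omega>0 \<in> T" by (rule gT)
  have card_F: "card (F s) = card (F (g \<omega>0))" if "s \<in> T" for s
    using le[OF that s0] le[OF s0 that] by simp
  have card_preimage: "card {\<omega>\<in>\<Omega>. g \<omega> \<in> A} = card A * card (F (g \<omega>0))" if "A \<subseteq> T" for A
  proof -
    have "{\<omega>\<in>\<Omega>. g \<omega> \<in> A} = (\<Union>s\<in>A. F s)" by (auto simp: F_def)
    moreover have "finite A" using that fin(2) by (rule finite_subset)
    ultimately have "card {\<omega>\<in>\<Omega>. g \<omega> \<in> A} = (\<Sum>s\<in>A. card (F s))"
      using fin(1) by (simp add: card_UN_disjoint F_def disjoint_iff)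
    then show ?thesis using card_F that by (simp add: subset_iff)
  qed
  have "\<Omega> = {\<omega>\<in>\<Omega>. g \<omega> \<in> T}" using gT by auto
  then have "card \<Omega> = card T * card (F (g \<omega>0))" using card_preimage[of T] by simp
  then show ?thesis using card_preimage[OF \<open>S \<subseteq> T\<close>] by simp
qed

lemma exists_inverse_mod_prime:
  fixes a :: int
  assumes "prime q" "\<not> int q dvd a"
  shows "\<exists>e. [e * a = 1] (mod int q)"
proof -
  have "coprime a (int q)"
    using prime_imp_coprime[of "int q" a] assms by (simp add: coprime_commute)
  then obtain e where "[a * e = 1] (mod int q)" using cong_solve_coprime_int by blast
  then show ?thesis by (auto simp: mult.commute)
qed

lemma cong_linear_equation_solvable:
  fixes D :: "nat \<Rightarrow> int"
  assumes "prime q" "k0 < K" "\<not> int q dvd D k0"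
  shows "\<exists>h. [(\<Sum>k<K. D k * h k) = w] (mod int q)"
proof -
  obtain e where e: "[e * D k0 = 1] (mod int q)" using exists_inverse_mod_prime assms by blast
  have "(\<Sum>k<K. D k * (if k = k0 then e * w else 0)) = (\<Sum>k<K. if k = k0 then D k0 * (e * w) else 0)"
    by (rule sum.cong) auto
  also have "\<dots> = (e * D k0) * w" using assms(2) by simp
  also have "[\<dots> = 1 * w] (mod int q)" by (intro cong_mult e cong_refl)
  finally show ?thesis by auto
qed

lemma exists_nonzero_minor:
  fixes D D' :: "nat \<Rightarrow> int"
  assumes "prime q" "k0 < K" "\<not> int q dvd D k0"
    and "\<not> (\<exists>c. \<forall>k<K. [D' k = c * D k] (mod int q))"
  shows "\<exists>k1<K. \<not> int q dvd (D k0 * D' k1 - D k1 * D' k0)"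
proof (rule ccontr)
  assume "\<not> ?thesis"
  then have minors: "[D k0 * D' k = D k * D' k0] (mod int q)" if "k < K" for k
    using that by (simp add: cong_iff_dvd_diff)
  obtain e where e: "[e * D k0 = 1] (mod int q)" using exists_inverse_mod_prime assms by blast
  have "[D' k = (e * D' k0) * D k] (mod int q)" if "k < K" for k
  proof -
    have "[D' k = (e * D k0) * D' k] (mod int q)" using cong_mult[OF e cong_refl] by (simp add: cong_sym)
    also have "(e * D k0) * D' k = e * (D k0 * D' k)" by simp
    also have "[\<dots> = e * (D k * D' k0)] (mod int q)" using minors[OF that] by (rule cong_scalar_left)
    finally show ?thesis by (simp add: algebra_simps)
  qed
  then show False using assms(4) by blast
qed

text \<open>Cramer's rule for two linear equations over \<open>\<int>/q\<close>.\<close>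
lemma cong_linear_equations_solvable:
  fixes D D' :: "nat \<Rightarrow> int"
  assumes "prime q" "k0 < K" "k1 < K" and det: "\<not> int q dvd (D k0 * D' k1 - D k1 * D' k0)"
  shows "\<exists>h. [(\<Sum>k<K. D k * h k) = w] (mod int q) \<and> [(\<Sum>k<K. D' k * h k) = w'] (mod int q)"
proof -
  obtain f where f: "[f * (D k0 * D' k1 - D k1 * D' k0) = 1] (mod int q)"
    using exists_inverse_mod_prime[OF assms(1) det] by blast
  have "k0 \<noteq> k1" using det by auto
  define h where "h k = (if k = k0 then f * (D' k1 * w - D k1 * w')
     else if k = k1 then f * (D k0 * w' - D' k0 * w) else 0)" for k
  have sum_h: "(\<Sum>k<K. C k * h k) = C k0 * h k0 + C k1 * h k1" for C :: "nat \<Rightarrow> int"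
  proof -
    have "(\<Sum>k<K. C k * h k) = (\<Sum>k<K. (if k = k0 then C k0 * h k0 else 0) + (if k = k1 then C k1 * h k1 else 0))"
      by (rule sum.cong) (use \<open>k0 \<noteq> k1\<close> in \<open>auto simp: h_def\<close>)
    then show ?thesis using assms(2,3) \<open>k0 \<noteq> k1\<close> by (simp add: sum.distrib)
  qed
  have "(\<Sum>k<K. D k * h k) = (f * (D k0 * D' k1 - D k1 * D' k0)) * w"
    unfolding sum_h using \<open>k0 \<noteq> k1\<close> by (simp add: h_def algebra_simps)
  also have "[\<dots> = 1 * w] (mod int q)" by (intro cong_mult f cong_refl)
  finally have "[(\<Sum>k<K. D k * h k) = w] (mod int q)" by simp
  moreover have "(\<Sum>k<K. D' k * h k) = (f * (D k0 * D' k1 - D k1 * D' k0)) * w'"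
    unfolding sum_h using \<open>k0 \<noteq> k1\<close> by (simp add: h_def algebra_simps)
  moreover have "[\<dots> = 1 * w'] (mod int q)" by (intro cong_mult f cong_refl)
  ultimately show ?thesis by auto
qed

lemma qary_less: "0 < q \<Longrightarrow> qary q j k < q"
  by (simp add: qary_def)

lemma qary_inj:
  assumes "1 < q" "j < q ^ K" "j' < q ^ K" "\<And>k. k < K \<Longrightarrow> qary q j k = qary q j' k"
  shows "j = j'"
  using assms(2-4)
proof (induction K arbitrary: j j')
  case (Suc K)
  have "j mod q = j' mod q" using Suc.prems(3)[of 0] by (simp add: qary_def)
  moreover have "j div q = j' div q"
  proof (rule Suc.IH)
    show "j div q < q ^ K" "j' div q < q ^ K"
      using Suc.prems(1,2) assms(1) by (simp_all add: less_mult_imp_div_less mult.commute)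
    show "qary q (j div q) k = qary q (j' div q) k" if "k < K" for k
      using Suc.prems(3)[of "Suc k"] that by (simp add: qary_def div_mult2_eq mult.commute)
  qed
  ultimately show ?case by (metis div_mult_mod_eq)
qed simp

definition digit_diff :: "nat \<Rightarrow> nat \<Rightarrow> nat \<Rightarrow> nat \<Rightarrow> int" where
  "digit_diff q m j k = int (qary q j k) - int (qary q m k)"

lemma digit_diff_cong_imp_eq:
  assumes "1 < q" "j < q ^ K" "j' < q ^ K"
    and "\<And>k. k < K \<Longrightarrow> [digit_diff q m j k = digit_diff q m j' k] (mod int q)"
  shows "j = j'"
proof (rule qary_inj[OF assms(1-3)])
  fix k assume "k < K"
  then have "[int (qary q j k) = int (qary q j' k)] (mod int q)"
    using cong_add[OF assms(4)[OF \<open>k < K\<close>] cong_refl[of "int (qary q m k)"]]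
    by (simp add: digit_diff_def)
  then show "qary q j k = qary q j' k"
    using qary_less assms(1) by (simp add: cong_int_iff cong_less_modulus_unique_nat)
qed

lemma digit_diff_not_dvd:
  assumes "1 < q" "j < q ^ K" "m < q ^ K" "j \<noteq> m"
  shows "\<exists>k0<K. \<not> int q dvd digit_diff q m j k0"
proof (rule ccontr)
  assume "\<not> ?thesis"
  then have "[digit_diff q m j k = digit_diff q m m k] (mod int q)" if "k < K" for k
    using that by (simp add: digit_diff_def cong_0_iff)
  then show False using digit_diff_cong_imp_eq[OF assms(1-3)] assms(4) by blast
qed

definition digit_diff_dependent :: "nat \<Rightarrow> nat \<Rightarrow> nat \<Rightarrow> nat \<Rightarrow> nat \<Rightarrow> bool" where
  "digit_diff_dependent q K m i j \<longleftrightarrow>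
     (\<exists>c. \<forall>k<K. [digit_diff q m j k = c * digit_diff q m i k] (mod int q))"

text \<open>The proportionality factor identifies \<open>j\<close>, and it cannot vanish since \<open>j \<noteq> m\<close>.\<close>
lemma card_digit_diff_dependent_le:
  assumes "1 < q" "m < q ^ K"
  shows "card {j. j < q ^ K \<and> j \<noteq> m \<and> digit_diff_dependent q K m i j} \<le> q - 1"
proof -
  define Dep where "Dep = {j. j < q ^ K \<and> j \<noteq> m \<and> digit_diff_dependent q K m i j}"
  define coeff where "coeff j =
    (SOME c. \<forall>k<K. [digit_diff q m j k = c * digit_diff q m i k] (mod int q))" for j
  define factor where "factor j = coeff j mod int q" for j
  have factor: "[digit_diff q m j k = factor j * digit_diff q m i k] (mod int q)"
    if "j \<in> Dep" "k < K" for j k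
  proof -
    have "\<exists>c. \<forall>k<K. [digit_diff q m j k = c * digit_diff q m i k] (mod int q)"
      using that(1) by (simp add: Dep_def digit_diff_dependent_def)
    then have "\<forall>k<K. [digit_diff q m j k = coeff j * digit_diff q m i k] (mod int q)"
      unfolding coeff_def by (rule someI_ex)
    then have "[digit_diff q m j k = coeff j * digit_diff q m i k] (mod int q)" using that(2) by blast
    moreover have "[coeff j * digit_diff q m i k = factor j * digit_diff q m i k] (mod int q)"
      unfolding factor_def by (rule cong_scalar_right) (simp add: cong_def)
    ultimately show ?thesis by (rule cong_trans)
  qed
  have eq: "j = j'" if "j \<in> Dep" "j' \<in> Dep" "factor j = factor j'" for j j'
  proof (rule digit_diff_cong_imp_eq[OF assms(1)])
    show "j < q ^ K" "j' < q ^ K" using that by (simp_all add: Dep_def)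
    show "[digit_diff q m j k = digit_diff q m j' k] (mod int q)" if "k < K" for k
      using factor[OF \<open>j \<in> Dep\<close> that] cong_sym[OF factor[OF \<open>j' \<in> Dep\<close> that]]
        \<open>factor j = factor j'\<close> by (simp add: cong_trans)
  qed
  have range: "factor j \<in> {1..<int q}" if "j \<in> Dep" for j
  proof -
    have "factor j \<noteq> 0"
    proof
      assume "factor j = 0"
      then have "j = m"
        using factor[OF that] assms that
        by (intro digit_diff_cong_imp_eq[of q j K m m]) (simp_all add: Dep_def digit_diff_def)
      then show False using that by (simp add: Dep_def)
    qed
    moreover have "0 \<le> factor j" "factor j < int q" using assms(1) by (simp_all add: factor_def)
    ultimately show ?thesis by simp
  qed
  have "inj_on factor Dep" using eq by (auto intro: inj_onI)
  moreover have "factor ` Dep \<subseteq> {1..<int q}" using range by blast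
  ultimately have "card Dep \<le> card {1..<int q}" by (intro card_inj_on_le) auto
  then show ?thesis using assms(1) by (simp add: Dep_def)
qed

lemma FqN_eq_if_cong:
  assumes "x \<in> FqN q N" "y \<in> FqN q N" "\<And>i. i < N \<Longrightarrow> [int (x i) = int (y i)] (mod int q)"
  shows "x = y"
proof (rule PiE_ext[OF assms(1,2)[unfolded FqN_def]])
  fix i assume "i \<in> {0..<N}"
  then have "x i < q" "y i < q" "[x i = y i] (mod q)"
    using assms by (auto simp: FqN_def PiE_iff cong_int_iff)
  then show "x i = y i" by (simp add: cong_less_modulus_unique_nat)
qed

lemma codeword_FqN: "0 < q \<Longrightarrow> codeword q K N j \<omega> \<in> FqN q N"
  by (auto simp: codeword_def FqN_def)

lemma codeword_cong:
  "i < N \<Longrightarrow> [int (codeword q K N j \<omega> i)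
     = (\<Sum>k<K. int (qary q j k) * int (fst \<omega> k i)) + int (snd \<omega> i)] (mod int q)"
  by (simp add: codeword_def zmod_int of_nat_sum)

definition shift_vec :: "nat \<Rightarrow> nat \<Rightarrow> (nat \<Rightarrow> int) \<Rightarrow> (nat \<Rightarrow> nat) \<Rightarrow> nat \<Rightarrow> nat" where
  "shift_vec q N c x = (\<lambda>i\<in>{0..<N}. nat ((int (x i) + c i) mod int q))"

lemma shift_vec_FqN: "0 < q \<Longrightarrow> shift_vec q N c x \<in> FqN q N"
  by (auto simp: shift_vec_def FqN_def nat_less_iff)

lemma shift_vec_cong: "0 < q \<Longrightarrow> i < N \<Longrightarrow> [int (shift_vec q N c x i) = int (x i) + c i] (mod int q)"
  by (simp add: shift_vec_def)

lemma inj_on_shift_vec: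
  assumes "0 < q" shows "inj_on (shift_vec q N c) (FqN q N)"
proof (rule inj_onI)
  fix x y assume xy: "x \<in> FqN q N" "y \<in> FqN q N" "shift_vec q N c x = shift_vec q N c y"
  show "x = y"
  proof (rule FqN_eq_if_cong[OF xy(1,2)])
    fix i assume i: "i < N"
    have "[int (x i) + c i = int (y i) + c i] (mod int q)"
      using shift_vec_cong[OF assms i, of c x] shift_vec_cong[OF assms i, of c y] xy(3)
      by (metis cong_sym cong_trans)
    then show "[int (x i) = int (y i)] (mod int q)" by (simp add: cong_add_rcancel)
  qed
qed

definition shift_code :: "nat \<Rightarrow> nat \<Rightarrow> nat \<Rightarrow> nat \<Rightarrow> (nat \<Rightarrow> nat \<Rightarrow> int) \<Rightarrow>
    (nat \<Rightarrow> nat \<Rightarrow> nat) \<times> (nat \<Rightarrow> nat) \<Rightarrow> (nat \<Rightarrow> nat \<Rightarrow> nat) \<times> (nat \<Rightarrow> nat)" where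
  "shift_code q K N m H \<omega> =
     ((\<lambda>k\<in>{0..<K}. shift_vec q N (H k) (fst \<omega> k)),
      shift_vec q N (\<lambda>i. - (\<Sum>k<K. int (qary q m k) * H k i)) (snd \<omega>))"

lemma shift_code_ensemble: "0 < q \<Longrightarrow> shift_code q K N m H \<omega> \<in> ensemble q K N"
  by (simp add: shift_code_def ensemble_def shift_vec_FqN)

lemma inj_on_shift_code:
  assumes "0 < q" shows "inj_on (shift_code q K N m H) (ensemble q K N)"
proof (rule inj_onI)
  fix \<omega> \<omega>' assume \<omega>: "\<omega> \<in> ensemble q K N" "\<omega>' \<in> ensemble q K N"
    and eq: "shift_code q K N m H \<omega> = shift_code q K N m H \<omega>'"
  have "fst \<omega> = fst \<omega>'"
  proof (rule PiE_ext)
    show "fst \<omega> \<in> PiE {0..<K} (\<lambda>_. FqN q N)" "fst \<omega>' \<in> PiE {0..<K} (\<lambda>_. FqN q N)"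
      using \<omega> by (auto simp: ensemble_def)
    fix k assume k: "k \<in> {0..<K}"
    then have "shift_vec q N (H k) (fst \<omega> k) = shift_vec q N (H k) (fst \<omega>' k)"
      using fun_cong[OF arg_cong[OF eq, of fst], of k] by (simp add: shift_code_def)
    moreover have "fst \<omega> k \<in> FqN q N" "fst \<omega>' k \<in> FqN q N" using \<omega> k by (auto simp: ensemble_def)
    ultimately show "fst \<omega> k = fst \<omega>' k" using inj_on_shift_vec[OF assms] by (auto dest: inj_onD)
  qed
  moreover have "snd \<omega> = snd \<omega>'"
    using arg_cong[OF eq, of snd] inj_on_shift_vec[OF assms] \<omega>
    by (auto simp: shift_code_def ensemble_def inj_on_def)
  ultimately show "\<omega> = \<omega>'" by (simp add: prod_eq_iff)
qed

lemma codeword_shift_code_cong: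
  assumes "0 < q" "i < N"
  shows "[int (codeword q K N j (shift_code q K N m H \<omega>) i)
          = int (codeword q K N j \<omega> i) + (\<Sum>k<K. digit_diff q m j k * H k i)] (mod int q)"
proof -
  let ?\<omega>' = "shift_code q K N m H \<omega>"
  let ?shifted = "(\<Sum>k<K. int (qary q j k) * (int (fst \<omega> k i) + H k i))
                   + (int (snd \<omega> i) - (\<Sum>k<K. int (qary q m k) * H k i))"
  have expand: "[int (codeword q K N j ?\<omega>' i)
      = (\<Sum>k<K. int (qary q j k) * int (fst ?\<omega>' k i)) + int (snd ?\<omega>' i)] (mod int q)"
    using assms(2) by (rule codeword_cong)
  have shift: "[(\<Sum>k<K. int (qary q j k) * int (fst ?\<omega>' k i)) + int (snd ?\<omega>' i) = ?shifted] (mod int q)"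
    using assms by (intro cong_add cong_sum cong_mult cong_refl)
      (simp_all add: shift_code_def shift_vec_cong[OF assms]
        shift_vec_cong[OF assms, of "\<lambda>i. - (\<Sum>k<K. int (qary q m k) * H k i)", simplified])
  have regroup: "?shifted = ((\<Sum>k<K. int (qary q j k) * int (fst \<omega> k i)) + int (snd \<omega> i))
                   + (\<Sum>k<K. digit_diff q m j k * H k i)"
    by (simp add: digit_diff_def algebra_simps sum.distrib sum_subtractf)
  have collapse: "[((\<Sum>k<K. int (qary q j k) * int (fst \<omega> k i)) + int (snd \<omega> i))
                   + (\<Sum>k<K. digit_diff q m j k * H k i)
      = int (codeword q K N j \<omega> i) + (\<Sum>k<K. digit_diff q m j k * H k i)] (mod int q)"
    by (intro cong_add cong_refl cong_sym[OF codeword_cong] assms(2))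
  have "[int (codeword q K N j ?\<omega>' i) = ?shifted] (mod int q)" using expand shift by (rule cong_trans)
  then show ?thesis unfolding regroup using collapse by (rule cong_trans)
qed

lemma codeword_shift_code:
  assumes "0 < q" "s \<in> FqN q N"
    and "\<And>i. i < N \<Longrightarrow>
      [(\<Sum>k<K. digit_diff q m j k * H k i) = int (s i) - int (codeword q K N j \<omega> i)] (mod int q)"
  shows "codeword q K N j (shift_code q K N m H \<omega>) = s"
proof (rule FqN_eq_if_cong[OF codeword_FqN[OF assms(1)] assms(2)])
  fix i assume i: "i < N"
  have "[int (codeword q K N j (shift_code q K N m H \<omega>) i)
      = int (codeword q K N j \<omega> i) + (int (s i) - int (codeword q K N j \<omega> i))] (mod int q)"
    using codeword_shift_code_cong[OF assms(1) i] cong_add[OF cong_refl assms(3)[OF i]]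
    by (rule cong_trans)
  then show "[int (codeword q K N j (shift_code q K N m H \<omega>) i) = int (s i)] (mod int q)" by simp
qed

lemma shift_code_cond_set:
  assumes "0 < q"
  shows "inj_on (shift_code q K N m H) (cond_set q K N m xm)"
    and "shift_code q K N m H ` cond_set q K N m xm \<subseteq> cond_set q K N m xm"
proof -
  show "inj_on (shift_code q K N m H) (cond_set q K N m xm)"
    using inj_on_shift_code[OF assms] by (rule inj_on_subset) (auto simp: cond_set_def)
  have "codeword q K N m (shift_code q K N m H \<omega>) = xm" if "\<omega> \<in> cond_set q K N m xm" for \<omega>
  proof (rule codeword_shift_code[OF assms])
    have "codeword q K N m \<omega> = xm" using that by (simp add: cond_set_def)
    then show "xm \<in> FqN q N" "\<And>i. [(\<Sum>k<K. digit_diff q m m k * H k i) = int (xm i) - int (codeword q K N m \<omega> i)] (mod int q)"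
      using codeword_FqN[OF assms, of K N m \<omega>] by (simp_all add: digit_diff_def)
  qed
  then show "shift_code q K N m H ` cond_set q K N m xm \<subseteq> cond_set q K N m xm"
    using shift_code_ensemble[OF assms] by (auto simp: cond_set_def)
qed

lemma FqN_finite: "finite (FqN q N)"
  by (simp add: FqN_def finite_PiE)

lemma cond_set_finite: "finite (cond_set q K N m xm)"
  by (rule finite_subset[of _ "ensemble q K N"]) (auto simp: cond_set_def ensemble_def finite_PiE FqN_finite)

lemma cond_set_nonempty:
  assumes "0 < q" "xm \<in> FqN q N"
  shows "cond_set q K N m xm \<noteq> {}"
proof -
  define \<omega>0 where "\<omega>0 = ((\<lambda>k\<in>{0..<K}. \<lambda>i\<in>{0..<N}. 0::nat), xm)"
  have "\<omega>0 \<in> ensemble q K N" using assms by (auto simp: \<omega>0_def ensemble_def FqN_def)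
  moreover have "codeword q K N m \<omega>0 = xm"
  proof (rule FqN_eq_if_cong[OF codeword_FqN[OF assms(1)] assms(2)])
    fix i assume "i < N"
    then show "[int (codeword q K N m \<omega>0 i) = int (xm i)] (mod int q)"
      using codeword_cong[of i N q K m \<omega>0] by (simp add: \<omega>0_def)
  qed
  ultimately have "\<omega>0 \<in> cond_set q K N m xm" by (simp add: cond_set_def)
  then show ?thesis by blast
qed

lemma card_codeword_preimage:
  assumes "prime q" "j < q ^ K" "m < q ^ K" "j \<noteq> m" "xm \<in> FqN q N" "S \<subseteq> FqN q N"
  shows "card {\<omega>\<in>cond_set q K N m xm. codeword q K N j \<omega> \<in> S} * card (FqN q N)
       = card S * card (cond_set q K N m xm)"
proof (rule card_preimage_uniform[OF cond_set_finite FqN_finite])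
  have q: "0 < q" "1 < q" using assms(1) prime_gt_0_nat prime_gt_1_nat by auto
  show "codeword q K N j \<omega> \<in> FqN q N" for \<omega> using q(1) by (rule codeword_FqN)
  show "cond_set q K N m xm \<noteq> {}" using cond_set_nonempty[OF q(1) assms(5)] .
  show "S \<subseteq> FqN q N" by fact
  fix s s' assume "s \<in> FqN q N" "s' \<in> FqN q N"
  obtain k0 where "k0 < K" "\<not> int q dvd digit_diff q m j k0"
    using digit_diff_not_dvd[OF q(2) assms(2-4)] by blast
  then have "\<forall>i. \<exists>h. [(\<Sum>k<K. digit_diff q m j k * h k) = int (s' i) - int (s i)] (mod int q)"
    using cong_linear_equation_solvable[OF assms(1)] by blast
  then obtain h where h: "\<And>i. [(\<Sum>k<K. digit_diff q m j k * h i k) = int (s' i) - int (s i)] (mod int q)"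
    by (auto dest!: choice)
  let ?\<tau> = "shift_code q K N m (\<lambda>k i. h i k)"
  have "codeword q K N j (?\<tau> \<omega>) = s'" if "codeword q K N j \<omega> = s" for \<omega>
    using that h by (intro codeword_shift_code[OF q(1) \<open>s' \<in> FqN q N\<close>]) auto
  then show "\<exists>\<tau>. inj_on \<tau> (cond_set q K N m xm) \<and> \<tau> ` cond_set q K N m xm \<subseteq> cond_set q K N m xm \<and>
      (\<forall>\<omega>\<in>cond_set q K N m xm. codeword q K N j \<omega> = s \<longrightarrow> codeword q K N j (\<tau> \<omega>) = s')"
    using shift_code_cond_set[OF q(1)] by blast
qed

lemma card_codeword_pair_preimage:
  assumes "prime q" "i < q ^ K" "j < q ^ K" "m < q ^ K" "i \<noteq> m" "\<not> digit_diff_dependent q K m i j"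
    "xm \<in> FqN q N" "S \<subseteq> FqN q N"
  shows "card {\<omega>\<in>cond_set q K N m xm. codeword q K N i \<omega> \<in> S \<and> codeword q K N j \<omega> \<in> S}
        * (card (FqN q N) * card (FqN q N))
       = (card S * card S) * card (cond_set q K N m xm)"
proof -
  have q: "0 < q" "1 < q" using assms(1) prime_gt_0_nat prime_gt_1_nat by auto
  let ?g = "\<lambda>\<omega>. (codeword q K N i \<omega>, codeword q K N j \<omega>)"
  have "card {\<omega>\<in>cond_set q K N m xm. ?g \<omega> \<in> S \<times> S} * card (FqN q N \<times> FqN q N)
       = card (S \<times> S) * card (cond_set q K N m xm)"
  proof (rule card_preimage_uniform[OF cond_set_finite finite_cartesian_product[OF FqN_finite FqN_finite]])
    show "?g \<omega> \<in> FqN q N \<times> FqN q N" for \<omega> using codeword_FqN[OF q(1)] by blast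
    show "cond_set q K N m xm \<noteq> {}" using cond_set_nonempty[OF q(1) assms(7)] .
    show "S \<times> S \<subseteq> FqN q N \<times> FqN q N" using assms(8) by blast
    fix s s' assume s': "s' \<in> FqN q N \<times> FqN q N"
    obtain k0 where k0: "k0 < K" "\<not> int q dvd digit_diff q m i k0"
      using digit_diff_not_dvd[OF q(2) assms(2,4,5)] by blast
    then obtain k1 where "k1 < K"
      "\<not> int q dvd (digit_diff q m i k0 * digit_diff q m j k1 - digit_diff q m i k1 * digit_diff q m j k0)"
      using exists_nonzero_minor[OF assms(1)] assms(6) unfolding digit_diff_dependent_def by blast
    then have "\<forall>l. \<exists>h. [(\<Sum>k<K. digit_diff q m i k * h k) = int (fst s' l) - int (fst s l)] (mod int q)
        \<and> [(\<Sum>k<K. digit_diff q m j k * h k) = int (snd s' l) - int (snd s l)] (mod int q)"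
      using cong_linear_equations_solvable[OF assms(1) k0(1)] by blast
    then obtain h where h: "\<And>l. [(\<Sum>k<K. digit_diff q m i k * h l k) = int (fst s' l) - int (fst s l)] (mod int q)"
        "\<And>l. [(\<Sum>k<K. digit_diff q m j k * h l k) = int (snd s' l) - int (snd s l)] (mod int q)"
      by (auto dest!: choice)
    let ?\<tau> = "shift_code q K N m (\<lambda>k l. h l k)"
    have "?g (?\<tau> \<omega>) = s'" if "?g \<omega> = s" for \<omega>
    proof -
      have "codeword q K N i (?\<tau> \<omega>) = fst s'" "codeword q K N j (?\<tau> \<omega>) = snd s'"
        using that h s' by (auto intro!: codeword_shift_code[OF q(1)])
      then show ?thesis by simp
    qed
    then show "\<exists>\<tau>. inj_on \<tau> (cond_set q K N m xm) \<and> \<tau> ` cond_set q K N m xm \<subseteq> cond_set q K N m xm \<and>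
        (\<forall>\<omega>\<in>cond_set q K N m xm. ?g \<omega> = s \<longrightarrow> ?g (\<tau> \<omega>) = s')"
      using shift_code_cond_set[OF q(1)] by blast
  qed
  then show ?thesis by (simp add: card_cartesian_product)
qed

theorem lemma2:
  fixes q K N m :: nat and P :: "(nat \<Rightarrow> nat) \<Rightarrow> 'b::finite \<Rightarrow> real"
    and xm :: "nat \<Rightarrow> nat" and y :: 'b and \<rho> :: real
  assumes "prime q" and "1 \<le> K" and "K < N" and "q ^ K > 2"
    and "\<And>x y. x \<in> FqN q N \<Longrightarrow> P x y \<ge> 0"
    and "\<And>x. x \<in> FqN q N \<Longrightarrow> (\<Sum>y\<in>UNIV. P x y) = 1"
    and "m < q ^ K" and "xm \<in> FqN q N"
    and "\<rho> \<ge> 1"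
    and "m' < q ^ K" and "m' \<noteq> m"
  shows "let M = q ^ K;
             \<alpha> = cond_prob q K N m xm
                   (\<lambda>\<omega>. codeword q K N m' \<omega> \<in> Aset q N P xm y);
             U = cond_prob q K N m xm
                   (\<lambda>\<omega>. \<exists>j<M. j \<noteq> m \<and> codeword q K N j \<omega> \<in> Aset q N P xm y)
         in (real M - 1) * \<alpha> / real q - ((real M - 1) * \<alpha>) powr \<rho> \<le> U
            \<and> U \<le> (real M - 1) * \<alpha>"
proof -
  have q: "0 < q" "1 < q" using \<open>prime q\<close> prime_gt_0_nat prime_gt_1_nat by auto
  define \<Omega> where "\<Omega> = cond_set q K N m xm"
  define A where "A = Aset q N P xm y"
  define E where "E j = {\<omega>\<in>\<Omega>. codeword q K N j \<omega> \<in> A}" for j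
  define J where "J = {j. j < q ^ K \<and> j \<noteq> m}"
  define a where "a = real (card A) / real (card (FqN q N))"
  have n: "0 < real (card \<Omega>)"
    using cond_set_nonempty[OF q(1) \<open>xm \<in> FqN q N\<close>] cond_set_finite by (simp add: \<Omega>_def card_gt_0_iff)
  have A: "A \<subseteq> FqN q N" by (auto simp: A_def Aset_def)
  have FqN: "0 < real (card (FqN q N))" using \<open>xm \<in> FqN q N\<close> FqN_finite by (auto simp: card_gt_0_iff)
  have card_E: "real (card (E j)) = real (card \<Omega>) * a" if "j \<in> J" for j
    using card_codeword_preimage[OF \<open>prime q\<close> _ \<open>m < q ^ K\<close> _ \<open>xm \<in> FqN q N\<close> A, of j] that FqN
    by (simp add: J_def E_def \<Omega>_def a_def field_simps flip: of_nat_mult)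
  have card_Int: "real (card (E i \<inter> E j)) \<le> real (card \<Omega>) * a\<^sup>2"
    if "i \<in> J" "j \<in> J" "\<not> digit_diff_dependent q K m i j" for i j
  proof -
    have "E i \<inter> E j = {\<omega>\<in>\<Omega>. codeword q K N i \<omega> \<in> A \<and> codeword q K N j \<omega> \<in> A}" by (auto simp: E_def)
    then show ?thesis
      using card_codeword_pair_preimage[OF \<open>prime q\<close> _ _ \<open>m < q ^ K\<close> _ that(3) \<open>xm \<in> FqN q N\<close> A] that FqN
      by (simp add: J_def \<Omega>_def a_def power2_eq_square field_simps flip: of_nat_mult)
  qed
  have related: "real (card {j\<in>J. digit_diff_dependent q K m i j}) \<le> real q - 1" for i
    using card_digit_diff_dependent_le[OF q(2) \<open>m < q ^ K\<close>, of i] q(2)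
    by (simp add: J_def conj_assoc of_nat_diff flip: of_nat_le_iff)
  have "J = {..<q ^ K} - {m}" by (auto simp: J_def)
  then have card_J: "real (card J) = real (q ^ K) - 1" using \<open>m < q ^ K\<close> by (simp add: of_nat_diff)
  have alpha: "cond_prob q K N m xm (\<lambda>\<omega>. codeword q K N m' \<omega> \<in> Aset q N P xm y) = a"
    using card_E[of m'] n \<open>m' < q ^ K\<close> \<open>m' \<noteq> m\<close> by (simp add: cond_prob_def J_def E_def A_def \<Omega>_def)
  have union: "cond_prob q K N m xm (\<lambda>\<omega>. \<exists>j<q ^ K. j \<noteq> m \<and> codeword q K N j \<omega> \<in> Aset q N P xm y)
      = real (card (\<Union>j\<in>J. E j)) / real (card \<Omega>)"
    unfolding cond_prob_def \<Omega>_def[symmetric]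
    by (rule arg_cong2[where f="\<lambda>x y. real (card x) / y"]) (auto simp: E_def J_def A_def)
  have "finite J" "\<And>j. finite (E j)" "0 \<le> a" "1 \<le> real q"
    using q(2) by (simp_all add: J_def E_def \<Omega>_def cond_set_finite a_def)
  then have "real (card J) * a / real q - (real (card J) * a) powr \<rho> \<le> real (card (\<Union>j\<in>J. E j)) / real (card \<Omega>)"
    "real (card (\<Union>j\<in>J. E j)) / real (card \<Omega>) \<le> real (card J) * a"
    using card_UN_uniform_bounds[of J E "real (card \<Omega>)" a "digit_diff_dependent q K m" "real q" \<rho>]
      card_E card_Int related n \<open>\<rho> \<ge> 1\<close> by simp_all
  then show ?thesis unfolding alpha union Let_def card_J by simp
qed

end
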